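(* For every $N\in\mathbb{N}$, $\Delta_{\ell_\infty^N}^{(c)}(R)=R$ for all $R\in[0,\infty)$.
   Context: $\ell_\infty^N$ is $\mathbb{R}^N$ with the max norm. For a cover $\mathcal{U}$ of a metric space $X$: $\mathrm{diam}(\mathcal{U})=\sup_{U\in\mathcal{U}}\mathrm{diam}(U)$; $\mathcal{L}(\mathcal{U})=\sup\{d\in[0,\infty): \text{every } E\subseteq X \text{ with } \mathrm{diam}(E)<d \text{ is contained in some } U\in\mathcal{U}\}$; point-finite means each point lies in only finitely many members. $\Delta_X^{(c)}(R)=\inf\{\mathrm{diam}(\mathcal{U}): \mathcal{U} \text{ point-finite cover of } X,\ \mathcal{L}(\mathcal{U})\geq R\}$. *)

theory Defs
  imports "HOL-Analysis.Analysis"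
begin

text \<open>The max-norm distance on real^'n, i.e. the metric of l_infinity^N with N = CARD('n).\<close>
definition linf_dist :: "real^'n \<Rightarrow> real^'n \<Rightarrow> real" where
  "linf_dist x y = Max (range (\<lambda>i. \<bar>x$i - y$i\<bar>))"

text \<open>Diameter of a set w.r.t. a distance d (value in extended reals; empty set has diameter 0).\<close>
definition set_diam :: "('a \<Rightarrow> 'a \<Rightarrow> real) \<Rightarrow> 'a set \<Rightarrow> ereal" where
  "set_diam d E = Sup ({0} \<union> {ereal (d x y) | x y. x \<in> E \<and> y \<in> E})"

definition cover_diam :: "('a \<Rightarrow> 'a \<Rightarrow> real) \<Rightarrow> 'a set set \<Rightarrow> ereal" where
  "cover_diam d \<U> = Sup (set_diam d ` \<U>)"

definition lebesgue_number :: "'a set \<Rightarrow> ('a \<Rightarrow> 'a \<Rightarrow> real) \<Rightarrow> 'a set set \<Rightarrow> ereal" where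
  "lebesgue_number X d \<U> = Sup {ereal r | r. r \<ge> 0 \<and>
      (\<forall>E. E \<subseteq> X \<and> set_diam d E < ereal r \<longrightarrow> (\<exists>U\<in>\<U>. E \<subseteq> U))}"

definition is_cover :: "'a set \<Rightarrow> 'a set set \<Rightarrow> bool" where
  "is_cover X \<U> \<longleftrightarrow> (\<forall>U\<in>\<U>. U \<subseteq> X) \<and> \<Union>\<U> = X"

definition point_finite :: "'a set \<Rightarrow> 'a set set \<Rightarrow> bool" where
  "point_finite X \<U> \<longleftrightarrow> (\<forall>x\<in>X. finite {U\<in>\<U>. x \<in> U})"

definition Delta_c :: "'a set \<Rightarrow> ('a \<Rightarrow> 'a \<Rightarrow> real) \<Rightarrow> real \<Rightarrow> ereal" where
  "Delta_c X d R = Inf {cover_diam d \<U> | \<U>. is_cover X \<U> \<and> point_finite X \<U>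
      \<and> lebesgue_number X d \<U> \<ge> ereal R}"

end

theory Submission
  imports Defs
begin

text \<open>Lower bound: a Lebesgue number exceeding r forces some member of the cover to contain
  the two-point set {0, (r,...,r)}, whose points are at distance r. Upper bound: the cubes of
  side R + e placed at the points of the lattice e\<int>^N form a point-finite cover of diameter
  R + e, and every set of diameter below R lies in a box of side R, which fits into one of them.\<close>

lemma linf_dist_le_iff: "linf_dist (x::real^'n) y \<le> c \<longleftrightarrow> (\<forall>i. \<bar>x$i - y$i\<bar> \<le> c)"
  unfolding linf_dist_def by (subst Max_le_iff) auto

lemma abs_component_le_linf_dist: "\<bar>(x::real^'n)$i - y$i\<bar> \<le> linf_dist x y"
  unfolding linf_dist_def by (rule Max_ge) auto

lemma set_diam_le:
  assumes "c \<ge> 0" "\<And>x y. x \<in> E \<Longrightarrow> y \<in> E \<Longrightarrow> d x y \<le> c"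
  shows "set_diam d E \<le> ereal c"
  unfolding set_diam_def using assms by (intro Sup_least) auto

lemma dist_le_set_diam: "x \<in> E \<Longrightarrow> y \<in> E \<Longrightarrow> ereal (d x y) \<le> set_diam d E"
  unfolding set_diam_def by (rule Sup_upper) auto

lemma set_diam_nonneg: "0 \<le> set_diam d E"
  unfolding set_diam_def by (rule Sup_upper) auto

lemma set_diam_le_cover_diam: "U \<in> \<U> \<Longrightarrow> set_diam d U \<le> cover_diam d \<U>"
  unfolding cover_diam_def by (rule Sup_upper) auto

lemma cover_diam_nonneg: "\<U> \<noteq> {} \<Longrightarrow> 0 \<le> cover_diam d \<U>"
  using set_diam_le_cover_diam set_diam_nonneg order_trans by blast

lemma subset_member_if_set_diam_less_lebesgue_number:
  assumes "E \<subseteq> X" "set_diam d E < lebesgue_number X d \<U>"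
  shows "\<exists>U\<in>\<U>. E \<subseteq> U"
  using assms unfolding lebesgue_number_def by (auto simp: less_Sup_iff)

lemma lebesgue_number_ge:
  assumes "r \<ge> 0" "\<And>E. E \<subseteq> X \<Longrightarrow> set_diam d E < ereal r \<Longrightarrow> \<exists>U\<in>\<U>. E \<subseteq> U"
  shows "ereal r \<le> lebesgue_number X d \<U>"
  unfolding lebesgue_number_def using assms by (intro Sup_upper) auto

lemma dist_le_cover_diam_if_lebesgue:
  assumes "{x, y} \<subseteq> X" "set_diam d {x, y} < lebesgue_number X d \<U>"
  shows "ereal (d x y) \<le> cover_diam d \<U>"
proof -
  obtain U where "U \<in> \<U>" "{x, y} \<subseteq> U"
    using subset_member_if_set_diam_less_lebesgue_number[OF assms] by blast
  then show ?thesis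
    using dist_le_set_diam[of x U y d] set_diam_le_cover_diam[of U \<U> d] by auto
qed

lemma lebesgue_number_le_cover_diam_linf:
  assumes "is_cover (UNIV :: (real^'n) set) \<U>"
  shows "lebesgue_number UNIV linf_dist \<U> \<le> cover_diam linf_dist \<U>"
proof (rule dense_le)
  fix y assume y: "y < lebesgue_number UNIV linf_dist \<U>"
  show "y \<le> cover_diam linf_dist \<U>"
  proof (cases "y \<le> 0")
    case True
    have "\<U> \<noteq> {}" using assms unfolding is_cover_def by auto
    with True show ?thesis using cover_diam_nonneg order_trans by blast
  next
    case False
    then obtain r where r: "y = ereal r" "0 < r" using y by (cases y) auto
    define c :: "real^'n" where "c = (\<chi> i. r)"
    have "set_diam linf_dist {0, c} \<le> ereal r"
      using r by (intro set_diam_le) (auto simp: linf_dist_le_iff c_def)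
    with y r have "ereal (linf_dist 0 c) \<le> cover_diam linf_dist \<U>"
      by (intro dist_le_cover_diam_if_lebesgue[where X = UNIV]) auto
    moreover have "r \<le> linf_dist 0 c"
      using abs_component_le_linf_dist[of 0 undefined c] r by (simp add: c_def)
    ultimately show ?thesis using r by (metis ereal_less_eq(3) order_trans)
  qed
qed

definition grid_cube :: "real \<Rightarrow> real \<Rightarrow> ('n \<Rightarrow> int) \<Rightarrow> (real^'n) set" where
  "grid_cube s L k = {x. \<forall>i. real_of_int (k i) * s \<le> x$i \<and> x$i \<le> real_of_int (k i) * s + L}"

lemma box_subset_grid_cube:
  assumes "s > 0" "r + s \<le> L" "\<And>i. a i \<le> x$i \<and> x$i \<le> a i + r"
  shows "x \<in> grid_cube s L (\<lambda>i. \<lfloor>a i / s\<rfloor>)"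
  unfolding grid_cube_def
proof safe
  fix i
  have "real_of_int \<lfloor>a i / s\<rfloor> * s \<le> a i"
    using assms(1) of_int_floor_le[of "a i / s"] by (simp add: le_divide_eq)
  moreover have "a i < (real_of_int \<lfloor>a i / s\<rfloor> + 1) * s"
    using real_of_int_floor_add_one_gt[where r = "a i / s"] by (subst (asm) pos_divide_less_eq[OF assms(1)])
  ultimately show "real_of_int \<lfloor>a i / s\<rfloor> * s \<le> x$i"
    and "x$i \<le> real_of_int \<lfloor>a i / s\<rfloor> * s + L"
    using assms(2) assms(3)[of i] by (auto simp: algebra_simps)
qed

lemma finite_grid_cube_indices:
  fixes x :: "real^'n"
  assumes "s > 0"
  shows "finite {k. x \<in> grid_cube s L k}"
proof (rule finite_subset)
  define A where "A = (\<lambda>i::'n. {\<lfloor>(x$i - L) / s\<rfloor> .. \<lceil>x$i / s\<rceil>})"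
  show "finite (Pi\<^sub>E UNIV A)" by (intro finite_PiE) (auto simp: A_def)
  show "{k. x \<in> grid_cube s L k} \<subseteq> Pi\<^sub>E UNIV A"
  proof
    fix k assume "k \<in> {k. x \<in> grid_cube s L k}"
    then have "x \<in> grid_cube s L k" by simp
    have "k i \<in> A i" for i
    proof -
      have "real_of_int (k i) \<le> x$i / s" "(x$i - L) / s \<le> real_of_int (k i)"
        using \<open>x \<in> grid_cube s L k\<close> assms unfolding grid_cube_def by (auto simp: field_simps)
      then show ?thesis
        unfolding A_def by (simp add: floor_le_iff) (meson le_of_int_ceiling of_int_le_iff order_trans)
    qed
    then show "k \<in> Pi\<^sub>E UNIV A" by (simp add: PiE_iff)
  qed
qed

lemma set_diam_grid_cube_le:
  assumes "L \<ge> 0"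
  shows "set_diam linf_dist (grid_cube s L k) \<le> ereal L"
proof (rule set_diam_le[OF assms])
  fix x y assume "x \<in> grid_cube s L k" "y \<in> grid_cube s L k"
  then show "linf_dist x y \<le> L"
    unfolding grid_cube_def linf_dist_le_iff by (auto simp: abs_le_iff) (smt (verit))+
qed

lemma bounded_diam_subset_box:
  fixes E :: "(real^'n) set"
  assumes "E \<noteq> {}" "\<And>x y. x \<in> E \<Longrightarrow> y \<in> E \<Longrightarrow> linf_dist x y \<le> r"
  shows "\<exists>a. \<forall>x\<in>E. \<forall>i. a i \<le> x$i \<and> x$i \<le> a i + r"
proof (intro exI ballI allI conjI)
  fix x i assume x: "x \<in> E"
  have close: "\<bar>x$i - y$i\<bar> \<le> r" if "x \<in> E" "y \<in> E" for x y
    using assms(2)[OF that] abs_component_le_linf_dist[of x i y] by linarith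
  have "bdd_below ((\<lambda>y. y$i) ` E)"
    using close[OF x] by (intro bdd_belowI[of _ "x$i - r"]) force
  then show "Inf ((\<lambda>y. y$i) ` E) \<le> x$i" using x by (intro cInf_lower) auto
  have "x$i - r \<le> Inf ((\<lambda>y. y$i) ` E)"
    using assms(1) close[OF x] by (intro cInf_greatest) force+
  then show "x$i \<le> Inf ((\<lambda>y. y$i) ` E) + r" by simp
qed

lemma Delta_c_linf_le:
  fixes R e :: real
  assumes "R \<ge> 0" "e > 0"
  shows "Delta_c (UNIV :: (real^'n) set) linf_dist R \<le> ereal (R + e)"
proof -
  define \<U> where "\<U> = range (grid_cube e (R + e) :: ('n \<Rightarrow> int) \<Rightarrow> (real^'n) set)"
  have "is_cover UNIV \<U>"
  proof -
    have "x \<in> grid_cube e (R + e) (\<lambda>i. \<lfloor>x$i / e\<rfloor>)" for x :: "real^'n"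
      using assms by (intro box_subset_grid_cube) auto
    then show ?thesis unfolding is_cover_def \<U>_def by blast
  qed
  moreover have "point_finite UNIV \<U>"
  proof -
    have "{U\<in>\<U>. x \<in> U} = grid_cube e (R + e) ` {k. x \<in> grid_cube e (R + e) k}" for x
      unfolding \<U>_def by auto
    then show ?thesis
      unfolding point_finite_def by (simp add: finite_imageI finite_grid_cube_indices assms(2))
  qed
  moreover have "ereal R \<le> lebesgue_number UNIV linf_dist \<U>"
  proof (rule lebesgue_number_ge[OF assms(1)])
    fix E :: "(real^'n) set" assume E: "set_diam linf_dist E < ereal R"
    show "\<exists>U\<in>\<U>. E \<subseteq> U"
    proof (cases "E = {}")
      case False
      have "linf_dist x y \<le> R" if "x \<in> E" "y \<in> E" for x y
        using dist_le_set_diam[OF that, of linf_dist] E by (metis ereal_less_eq(3) le_less_trans less_imp_le)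
      then obtain a where "\<forall>x\<in>E. \<forall>i. a i \<le> x$i \<and> x$i \<le> a i + R"
        using bounded_diam_subset_box[OF False] by blast
      then have "E \<subseteq> grid_cube e (R + e) (\<lambda>i. \<lfloor>a i / e\<rfloor>)"
        using box_subset_grid_cube[OF assms(2), of R "R + e" a] by blast
      then show ?thesis unfolding \<U>_def by blast
    qed (auto simp: \<U>_def)
  qed
  ultimately have "Delta_c (UNIV :: (real^'n) set) linf_dist R \<le> cover_diam linf_dist \<U>"
    unfolding Delta_c_def by (intro Inf_lower) blast
  also have "\<dots> \<le> ereal (R + e)"
    unfolding cover_diam_def \<U>_def using assms
    by (intro Sup_least) (auto intro: set_diam_grid_cube_le)
  finally show ?thesis .
qed

theorem proposition4p5:
  fixes R :: real
  assumes "R \<ge> 0"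
  shows "Delta_c (UNIV :: (real^'n) set) linf_dist R = ereal R"
proof (rule antisym)
  show "Delta_c (UNIV :: (real^'n) set) linf_dist R \<le> ereal R"
    by (rule ereal_le_epsilon2) (use Delta_c_linf_le[OF assms] in auto)
  show "ereal R \<le> Delta_c (UNIV :: (real^'n) set) linf_dist R"
    unfolding Delta_c_def
    using lebesgue_number_le_cover_diam_linf order_trans by (intro Inf_greatest) blast
qed

end
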